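(* Let $c$ be a cost function on $(\mathbb{R}^n)^N$, $\alpha_i>0$, and $(\Phi_1,\dots,\Phi_N)$ an admissible tuple with $0<\int e^{-\alpha_i\Phi_i}dx<\infty$ for all $i$. Let $\mu_i=e^{-\alpha_i\Phi_i(x_i)}dx_i/\int e^{-\alpha_i\Phi_i}dx_i$ and $d(x)=\sum_{i}\Phi_i(x_i)-c(x)$. Assume that for every tuple of probability measures $\nu_1,\dots,\nu_N$ on $\mathbb{R}^n$, $$K^{\min}_d(\nu_1,\dots,\nu_N)\le\sum_{i=1}^N\frac1{\alpha_i}\mathrm{Ent}_{\mu_i}(\nu_i).$$ Then $\prod_i(\int e^{-\alpha_iV_i}dx)^{1/\alpha_i}\le\prod_i(\int e^{-\alpha_i\Phi_i}dx)^{1/\alpha_i}$ for every admissible tuple $(V_i)$ with $0<\int e^{-\alpha_iV_i}dx<\infty$ and $V_i,\Phi_i\in L^1(\nu_i)$, where $\nu_i=e^{-\alpha_iV_i}dx/\int e^{-\alpha_iV_i}dx$; i.e. $(\Phi_i)$ maximizes the functional $\mathcal{BS}_{\alpha,m}$ with Lebesgue reference measures $m_i=dx_i$ over such tuples.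
   Context: A tuple $(V_i)$ of functions $V_i:\mathbb{R}^n\to(-\infty,+\infty]$ is admissible (for $c$) if $\sum_iV_i(x_i)\ge c(x)$ for all $x=(x_1,\dots,x_N)\in(\mathbb{R}^n)^N$. $K^{\min}_d(\nu_1,\dots,\nu_N)=\inf_\pi\int d\,d\pi$ over probability measures $\pi$ on $(\mathbb{R}^n)^N$ with marginals $\nu_1,\dots,\nu_N$. $\mathrm{Ent}_\mu(\nu)=\int\rho\log\rho\,d\mu$ if $\nu=\rho\mu$, and $+\infty$ otherwise. *)

theory Defs
  imports "HOL-Probability.Probability"
begin

text \<open>Index set {1..N} is a finite type 'i; R^n is a euclidean space 'a with
  Lebesgue measure lborel. Potentials take values in ereal (meant: (-inf,+inf]).\<close>

definition admissible :: "(('i::finite \<Rightarrow> 'a) \<Rightarrow> real) \<Rightarrow> ('i \<Rightarrow> 'a \<Rightarrow> ereal) \<Rightarrow> bool" where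
  "admissible c V \<longleftrightarrow> (\<forall>x. (\<Sum>i\<in>UNIV. V i (x i)) \<ge> ereal (c x))"

definition expn :: "real \<Rightarrow> ereal \<Rightarrow> ennreal" where
  "expn a v = (case v of ereal r \<Rightarrow> ennreal (exp (- a * r)) | PInfty \<Rightarrow> 0 | MInfty \<Rightarrow> \<infinity>)"

definition Zint :: "real \<Rightarrow> ('a::euclidean_space \<Rightarrow> ereal) \<Rightarrow> ennreal" where
  "Zint a V = (\<integral>\<^sup>+ x. expn a (V x) \<partial>lborel)"

definition gibbs :: "real \<Rightarrow> ('a::euclidean_space \<Rightarrow> ereal) \<Rightarrow> 'a measure" where
  "gibbs a V = density lborel (\<lambda>x. expn a (V x) / Zint a V)"

definition couplings :: "('i::finite \<Rightarrow> 'a::euclidean_space measure) \<Rightarrow> ('i \<Rightarrow> 'a) measure set" where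
  "couplings \<nu> = {\<pi>. prob_space \<pi> \<and> sets \<pi> = sets (PiM UNIV (\<lambda>_. borel)) \<and>
                     (\<forall>i. distr \<pi> borel (\<lambda>x. x i) = \<nu> i)}"

text \<open>Optimal transport value for a nonnegative cost d (the case needed below).\<close>
definition Kmin :: "(('i::finite \<Rightarrow> 'a::euclidean_space) \<Rightarrow> ennreal) \<Rightarrow> ('i \<Rightarrow> 'a measure) \<Rightarrow> ennreal" where
  "Kmin d \<nu> = (INF \<pi>\<in>couplings \<nu>. \<integral>\<^sup>+ x. d x \<partial>\<pi>)"

text \<open>The integral is taken as (positive part) - (negative part); the negative part is finite
  since rho log rho >= -1/e and mu is finite.\<close>
definition Ent :: "'a measure \<Rightarrow> 'a measure \<Rightarrow> ereal" where
  "Ent \<mu> \<nu> = (if (\<exists>\<rho>\<in>borel_measurable \<mu>. \<nu> = density \<mu> \<rho>) then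
      (let \<rho> = (\<lambda>x. enn2real (RN_deriv \<mu> \<nu> x)) in
        enn2ereal (\<integral>\<^sup>+ x. ennreal (\<rho> x * ln (\<rho> x)) \<partial>\<mu>)
        - enn2ereal (\<integral>\<^sup>+ x. ennreal (- (\<rho> x * ln (\<rho> x))) \<partial>\<mu>))
    else \<infinity>)"

definition L1e :: "'a measure \<Rightarrow> ('a \<Rightarrow> ereal) \<Rightarrow> bool" where
  "L1e M f \<longleftrightarrow> f \<in> borel_measurable M \<and> (AE x in M. \<bar>f x\<bar> \<noteq> \<infinity>) \<and>
                integrable M (\<lambda>x. real_of_ereal (f x))"

end

theory Submission
  imports Defs
begin

text \<open>Test the transport-entropy inequality with the Gibbs measures \<open>\<nu>\<^sub>i\<close> of the
  potentials \<open>V\<^sub>i\<close>. Since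
  \<open>log (d\<nu>\<^sub>i / d\<mu>\<^sub>i) = \<alpha>\<^sub>i (\<Phi>\<^sub>i - V\<^sub>i) + log Z(\<Phi>\<^sub>i) - log Z(V\<^sub>i)\<close>,
  the right-hand side equals \<open>\<Sum>\<^sub>i \<integral>(\<Phi>\<^sub>i - V\<^sub>i) d\<nu>\<^sub>i + \<Sum>\<^sub>i (log Z(\<Phi>\<^sub>i) - log Z(V\<^sub>i)) / \<alpha>\<^sub>i\<close>.
  Admissibility of \<open>V\<close> gives \<open>d \<ge> \<Sum>\<^sub>i (\<Phi>\<^sub>i - V\<^sub>i)\<close> pointwise, so every coupling of the
  \<open>\<nu>\<^sub>i\<close> costs at least \<open>\<Sum>\<^sub>i \<integral>(\<Phi>\<^sub>i - V\<^sub>i) d\<nu>\<^sub>i\<close>. The integrals cancel and leave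
  \<open>\<Sum>\<^sub>i log Z(V\<^sub>i) / \<alpha>\<^sub>i \<le> \<Sum>\<^sub>i log Z(\<Phi>\<^sub>i) / \<alpha>\<^sub>i\<close>.\<close>

lemma ereal_le_enn2ereal_ennreal: "ereal x \<le> enn2ereal (ennreal x)"
  by (cases "0 \<le> x") (auto simp: ennreal_neg zero_ennreal.rep_eq)

lemma enn2ereal_eq_ereal_enn2real: "x \<noteq> \<infinity> \<Longrightarrow> enn2ereal x = ereal (enn2real x)"
  by (cases x) simp_all

lemma ennreal_integral_le_nn_integral:
  fixes f :: "'a \<Rightarrow> real"
  assumes "integrable M f"
  shows "ennreal (\<integral>x. f x \<partial>M) \<le> (\<integral>\<^sup>+ x. ennreal (f x) \<partial>M)"
proof -
  have "(\<integral>x. f x \<partial>M) \<le> enn2real (\<integral>\<^sup>+ x. ennreal (f x) \<partial>M)"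
    by (simp add: real_lebesgue_integral_def[OF assms])
  then have "ennreal (\<integral>x. f x \<partial>M) \<le> ennreal (enn2real (\<integral>\<^sup>+ x. ennreal (f x) \<partial>M))"
    by (rule ennreal_leI)
  also have "\<dots> = (\<integral>\<^sup>+ x. ennreal (f x) \<partial>M)"
    using integrableD(2)[OF assms] by (simp add: less_top)
  finally show ?thesis .
qed

definition gibbs_weight :: "real \<Rightarrow> ('a \<Rightarrow> ereal) \<Rightarrow> 'a \<Rightarrow> real" where
  "gibbs_weight a V x = (if V x = \<infinity> then 0 else exp (- a * real_of_ereal (V x)))"

lemma borel_measurable_gibbs_weight [measurable]:
  fixes V :: "'a::euclidean_space \<Rightarrow> ereal"
  assumes [measurable]: "V \<in> borel_measurable borel"
  shows "gibbs_weight a V \<in> borel_measurable borel"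
  unfolding gibbs_weight_def by measurable

lemma gibbs_weight_nonneg: "0 \<le> gibbs_weight a V x"
  by (simp add: gibbs_weight_def)

lemma gibbs_weight_pos_iff: "0 < gibbs_weight a V x \<longleftrightarrow> V x \<noteq> \<infinity>"
  by (simp add: gibbs_weight_def)

lemma expn_eq_gibbs_weight: "V x \<noteq> -\<infinity> \<Longrightarrow> expn a (V x) = ennreal (gibbs_weight a V x)"
  by (cases "V x") (auto simp: expn_def gibbs_weight_def)

definition gibbs_density :: "real \<Rightarrow> ('a::euclidean_space \<Rightarrow> ereal) \<Rightarrow> 'a \<Rightarrow> real" where
  "gibbs_density a V x = gibbs_weight a V x / enn2real (Zint a V)"

lemma borel_measurable_gibbs_density [measurable]:
  "V \<in> borel_measurable borel \<Longrightarrow> gibbs_density a V \<in> borel_measurable borel"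
  unfolding gibbs_density_def[abs_def] by (intro borel_measurable_divide borel_measurable_gibbs_weight) simp_all

lemma gibbs_density_nonneg: "0 \<le> gibbs_density a V x"
  by (simp add: gibbs_density_def gibbs_weight_nonneg)

lemma gibbs_density_pos_iff:
  assumes "0 < Zint a V" "Zint a V < \<infinity>"
  shows "0 < gibbs_density a V x \<longleftrightarrow> V x \<noteq> \<infinity>"
proof -
  have "0 < enn2real (Zint a V)"
    using assms by (simp add: enn2real_positive_iff less_top)
  then show ?thesis
    by (simp add: gibbs_density_def zero_less_divide_iff gibbs_weight_pos_iff)
qed

lemma
  fixes V :: "'a::euclidean_space \<Rightarrow> ereal"
  assumes [measurable]: "V \<in> borel_measurable borel"
    and V_range: "\<And>x. V x \<noteq> -\<infinity>" and Z: "0 < Zint a V" "Zint a V < \<infinity>"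
  shows gibbs_eq_density: "gibbs a V = density lborel (\<lambda>x. ennreal (gibbs_density a V x))"
    and prob_space_gibbs: "prob_space (gibbs a V)"
proof -
  define Z where "Z = enn2real (Zint a V)"
  have Z_eq: "Zint a V = ennreal Z" and Z_pos: "Z > 0"
    using Z by (auto simp: Z_def less_top enn2real_positive_iff)
  have "expn a (V x) / Zint a V = ennreal (gibbs_density a V x)" for x
    using Z_pos
    by (simp add: gibbs_density_def expn_eq_gibbs_weight V_range Z_eq divide_ennreal gibbs_weight_nonneg)
  then show gibbs: "gibbs a V = density lborel (\<lambda>x. ennreal (gibbs_density a V x))"
    by (simp add: gibbs_def)
  have "emeasure (gibbs a V) (space (gibbs a V))
      = (\<integral>\<^sup>+ x. ennreal (gibbs_weight a V x) / ennreal Z \<partial>lborel)"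
    by (simp add: gibbs emeasure_density gibbs_density_def Z_def[symmetric] divide_ennreal
        gibbs_weight_nonneg Z_pos)
  also have "\<dots> = Zint a V / ennreal Z"
    by (simp add: nn_integral_divide Zint_def expn_eq_gibbs_weight V_range)
  also have "\<dots> = 1"
    using Z_pos by (simp add: Z_eq divide_ennreal)
  finally show "prob_space (gibbs a V)"
    by (rule prob_spaceI)
qed

lemma ln_gibbs_density_ratio:
  assumes "\<bar>\<Phi> x\<bar> \<noteq> \<infinity>" "\<bar>V x\<bar> \<noteq> \<infinity>"
    and "0 < Zint a \<Phi>" "Zint a \<Phi> < \<infinity>" "0 < Zint a V" "Zint a V < \<infinity>"
  shows "ln (gibbs_density a V x / gibbs_density a \<Phi> x)
    = a * (real_of_ereal (\<Phi> x) - real_of_ereal (V x))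
      + (ln (enn2real (Zint a \<Phi>)) - ln (enn2real (Zint a V)))"
proof -
  have "0 < enn2real (Zint a \<Phi>)" "0 < enn2real (Zint a V)"
    using assms(3-) by (simp_all add: enn2real_positive_iff less_top)
  moreover obtain p v where "\<Phi> x = ereal p" "V x = ereal v"
    using assms(1,2) by (cases "\<Phi> x"; cases "V x") auto
  ultimately show ?thesis
    by (simp add: gibbs_density_def gibbs_weight_def ln_div ln_mult algebra_simps)
qed

lemma density_eq_density_density_ratio:
  fixes f g :: "'a \<Rightarrow> real"
  assumes [measurable]: "f \<in> borel_measurable M" "g \<in> borel_measurable M"
    and nonneg: "\<And>x. 0 \<le> f x" "\<And>x. 0 \<le> g x"
    and abs_cont: "AE x in M. 0 < f x \<longrightarrow> 0 < g x"
  shows "density M (\<lambda>x. ennreal (f x))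
    = density (density M (\<lambda>x. ennreal (g x))) (\<lambda>x. ennreal (f x / g x))"
proof -
  \<comment> \<open>Where \<open>g\<close> vanishes, \<open>f\<close> vanishes a.e., and \<open>f / g = 0\<close> there by \<open>x / 0 = 0\<close>.\<close>
  have "AE x in M. ennreal (f x) = ennreal (g x) * ennreal (f x / g x)"
    using abs_cont
  proof eventually_elim
    case (elim x)
    then show ?case
      using nonneg[of x] by (cases "f x = 0") (auto simp: ennreal_mult'[symmetric])
  qed
  then show ?thesis
    by (simp add: density_density_eq density_cong)
qed

lemma gibbs_eq_density_gibbs:
  fixes \<Phi> V :: "'a::euclidean_space \<Rightarrow> ereal"
  assumes \<Phi>_meas[measurable]: "\<Phi> \<in> borel_measurable borel"
    and V_meas[measurable]: "V \<in> borel_measurable borel"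
    and \<Phi>_range: "\<And>x. \<Phi> x \<noteq> -\<infinity>" and V_range: "\<And>x. V x \<noteq> -\<infinity>"
    and \<Phi>_Z: "0 < Zint a \<Phi>" "Zint a \<Phi> < \<infinity>" and V_Z: "0 < Zint a V" "Zint a V < \<infinity>"
    and \<Phi>_finite: "AE x in gibbs a V. \<Phi> x \<noteq> \<infinity>"
  shows "gibbs a V
    = density (gibbs a \<Phi>) (\<lambda>x. ennreal (gibbs_density a V x / gibbs_density a \<Phi> x))"
proof -
  have "AE x in lborel. 0 < gibbs_density a V x \<longrightarrow> 0 < gibbs_density a \<Phi> x"
    using \<Phi>_finite unfolding gibbs_eq_density[OF V_meas V_range V_Z]
    by (subst (asm) AE_density)
      (auto simp: gibbs_density_pos_iff[OF \<Phi>_Z] elim!: eventually_mono)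
  then show ?thesis
    unfolding gibbs_eq_density[OF V_meas V_range V_Z]
      gibbs_eq_density[OF \<Phi>_meas \<Phi>_range \<Phi>_Z]
    by (intro density_eq_density_density_ratio gibbs_density_nonneg) measurable
qed

lemma Ent_density_eq_integral_ln:
  fixes r :: "'a \<Rightarrow> real" and \<mu> :: "'a measure"
  defines "\<nu> \<equiv> density \<mu> (\<lambda>x. ennreal (r x))"
  assumes "sigma_finite_measure \<mu>"
    and [measurable]: "r \<in> borel_measurable \<mu>"
    and r_nonneg: "\<And>x. 0 \<le> r x"
    and ln_integrable: "integrable \<nu> (\<lambda>x. ln (r x))"
  shows "Ent \<mu> \<nu> = ereal (\<integral>x. ln (r x) \<partial>\<nu>)"
proof -
  define \<rho> where "\<rho> x = enn2real (RN_deriv \<mu> \<nu> x)" for x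
  have "AE x in \<mu>. ennreal (r x) = RN_deriv \<mu> \<nu> x"
    unfolding \<nu>_def by (rule sigma_finite_measure.RN_deriv_unique) (use assms in auto)
  then have \<rho>_eq: "AE x in \<mu>. \<rho> x = r x"
    by eventually_elim (metis \<rho>_def enn2real_ennreal r_nonneg)
  \<comment> \<open>\<open>Ent\<close> integrates the positive and negative parts separately: \<open>s = 1\<close> and \<open>s = -1\<close>.\<close>
  have entropy_part: "(\<integral>\<^sup>+ x. ennreal (s * (\<rho> x * ln (\<rho> x))) \<partial>\<mu>)
      = (\<integral>\<^sup>+ x. ennreal (s * ln (r x)) \<partial>\<nu>)" for s
  proof -
    have "(\<integral>\<^sup>+ x. ennreal (s * (\<rho> x * ln (\<rho> x))) \<partial>\<mu>)
        = (\<integral>\<^sup>+ x. ennreal (r x) * ennreal (s * ln (r x)) \<partial>\<mu>)"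
      using \<rho>_eq by (intro nn_integral_cong_AE, eventually_elim)
        (simp add: r_nonneg mult.left_commute flip: ennreal_mult')
    also have "\<dots> = (\<integral>\<^sup>+ x. ennreal (s * ln (r x)) \<partial>\<nu>)"
      unfolding \<nu>_def by (simp add: nn_integral_density)
    finally show ?thesis .
  qed
  have "Ent \<mu> \<nu> = enn2ereal (\<integral>\<^sup>+ x. ennreal (ln (r x)) \<partial>\<nu>)
      - enn2ereal (\<integral>\<^sup>+ x. ennreal (- ln (r x)) \<partial>\<nu>)"
    using entropy_part[of 1] entropy_part[of "-1"]
    by (auto simp: Ent_def \<rho>_def \<nu>_def Let_def)
  also have "\<dots> = ereal (\<integral>x. ln (r x) \<partial>\<nu>)"
    using integrableD(2,3)[OF ln_integrable]
    by (simp add: real_lebesgue_integral_def[OF ln_integrable] enn2ereal_eq_ereal_enn2real)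
  finally show ?thesis .
qed

lemma Ent_gibbs_gibbs:
  fixes \<Phi> V :: "'a::euclidean_space \<Rightarrow> ereal" and a :: real
  defines "\<nu> \<equiv> gibbs a V"
  assumes \<Phi>_meas[measurable]: "\<Phi> \<in> borel_measurable borel"
    and V_meas[measurable]: "V \<in> borel_measurable borel"
    and \<Phi>_range: "\<And>x. \<Phi> x \<noteq> -\<infinity>" and V_range: "\<And>x. V x \<noteq> -\<infinity>"
    and \<Phi>_Z: "0 < Zint a \<Phi>" "Zint a \<Phi> < \<infinity>" and V_Z: "0 < Zint a V" "Zint a V < \<infinity>"
    and L1: "L1e \<nu> \<Phi>" "L1e \<nu> V"
  shows "Ent (gibbs a \<Phi>) \<nu> = ereal (a * (\<integral>x. real_of_ereal (\<Phi> x) - real_of_ereal (V x) \<partial>\<nu>)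
    + ln (enn2real (Zint a \<Phi>)) - ln (enn2real (Zint a V)))"
proof -
  define r where "r x = gibbs_density a V x / gibbs_density a \<Phi> x" for x
  define h where "h x = a * (real_of_ereal (\<Phi> x) - real_of_ereal (V x))
    + (ln (enn2real (Zint a \<Phi>)) - ln (enn2real (Zint a V)))" for x
  have [measurable]: "r \<in> borel_measurable borel" "h \<in> borel_measurable borel"
    unfolding r_def h_def by measurable
  interpret \<nu>: prob_space \<nu>
    unfolding \<nu>_def using prob_space_gibbs[OF V_meas V_range V_Z] .
  have sets_\<nu> [measurable_cong]: "sets \<nu> = sets borel"
    by (simp add: \<nu>_def gibbs_def)
  have finite_AE: "AE x in \<nu>. \<bar>\<Phi> x\<bar> \<noteq> \<infinity> \<and> \<bar>V x\<bar> \<noteq> \<infinity>"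
    using L1 by (auto simp: L1e_def elim: eventually_elim2)
  then have \<nu>_eq: "\<nu> = density (gibbs a \<Phi>) (\<lambda>x. ennreal (r x))"
    unfolding r_def \<nu>_def using \<Phi>_Z V_Z
    by (intro gibbs_eq_density_gibbs \<Phi>_meas V_meas \<Phi>_range V_range) (auto elim: eventually_mono)
  have ln_r: "AE x in \<nu>. h x = ln (r x)"
    using finite_AE
  proof eventually_elim
    case (elim x)
    then show ?case
      unfolding r_def h_def by (intro ln_gibbs_density_ratio[symmetric] \<Phi>_Z V_Z) simp_all
  qed
  have integrable_h: "integrable \<nu> h"
    using L1 unfolding h_def[abs_def] by (simp add: L1e_def)
  have "Ent (gibbs a \<Phi>) \<nu> = ereal (\<integral>x. ln (r x) \<partial>\<nu>)"
    unfolding \<nu>_eq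
  proof (rule Ent_density_eq_integral_ln)
    show "sigma_finite_measure (gibbs a \<Phi>)"
      using prob_space_gibbs[OF \<Phi>_meas \<Phi>_range \<Phi>_Z] by (rule prob_space_imp_sigma_finite)
    show "integrable (density (gibbs a \<Phi>) (\<lambda>x. ennreal (r x))) (\<lambda>x. ln (r x))"
      unfolding \<nu>_eq[symmetric] using ln_r by (intro integrable_cong_AE_imp[OF integrable_h]) measurable
  qed (simp_all add: r_def gibbs_def gibbs_density_nonneg divide_nonneg_nonneg)
  also have "(\<integral>x. ln (r x) \<partial>\<nu>) = (\<integral>x. h x \<partial>\<nu>)"
    using AE_symmetric[OF ln_r] by (intro integral_cong_AE) measurable
  also have "\<dots> = a * (\<integral>x. real_of_ereal (\<Phi> x) - real_of_ereal (V x) \<partial>\<nu>)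
      + (ln (enn2real (Zint a \<Phi>)) - ln (enn2real (Zint a V)))"
    using L1 by (simp add: h_def L1e_def \<nu>.prob_space)
  finally show ?thesis
    by simp
qed

lemma
  fixes \<nu> :: "'i::finite \<Rightarrow> 'a::euclidean_space measure"
  assumes "\<pi> \<in> couplings \<nu>"
  shows measurable_coupling_component: "(\<lambda>x. x i) \<in> measurable \<pi> borel"
    and distr_coupling_component: "distr \<pi> borel (\<lambda>x. x i) = \<nu> i"
proof -
  have sets_\<pi>: "sets \<pi> = sets (PiM UNIV (\<lambda>_. borel :: 'a measure))"
    using assms by (simp add: couplings_def)
  show "(\<lambda>x. x i) \<in> measurable \<pi> borel"
    using measurable_component_singleton[of i UNIV "\<lambda>_. borel :: 'a measure"]
    by (simp add: measurable_cong_sets[OF sets_\<pi> refl])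
  show "distr \<pi> borel (\<lambda>x. x i) = \<nu> i"
    using assms by (simp add: couplings_def)
qed

lemma AE_coupling_component:
  assumes "\<pi> \<in> couplings \<nu>" and "AE y in \<nu> i. P y"
  shows "AE x in \<pi>. P (x i)"
proof -
  have "AE y in distr \<pi> borel (\<lambda>x. x i). P y"
    unfolding distr_coupling_component[OF assms(1)] by (rule assms(2))
  then show ?thesis
    by (rule AE_distrD[OF measurable_coupling_component[OF assms(1)]])
qed

lemma
  fixes g :: "'a::euclidean_space \<Rightarrow> real"
  assumes \<pi>: "\<pi> \<in> couplings \<nu>" and g: "integrable (\<nu> i) g"
  shows integrable_coupling_component: "integrable \<pi> (\<lambda>x. g (x i))"
    and integral_coupling_component: "(\<integral>x. g (x i) \<partial>\<pi>) = (\<integral>y. g y \<partial>\<nu> i)"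
proof -
  note \<nu>_eq = distr_coupling_component[OF \<pi>, of i, symmetric]
  have "g \<in> borel_measurable borel"
    using borel_measurable_integrable[OF g] by (simp add: \<nu>_eq)
  then show "integrable \<pi> (\<lambda>x. g (x i))" "(\<integral>x. g (x i) \<partial>\<pi>) = (\<integral>y. g y \<partial>\<nu> i)"
    using g measurable_coupling_component[OF \<pi>]
    by (simp_all add: \<nu>_eq integrable_distr_eq integral_distr)
qed

lemma admissible_sum_diff_le:
  fixes \<Phi> V :: "'i::finite \<Rightarrow> 'a \<Rightarrow> ereal"
  assumes "admissible c V" and finite: "\<And>i. \<bar>\<Phi> i (x i)\<bar> \<noteq> \<infinity> \<and> \<bar>V i (x i)\<bar> \<noteq> \<infinity>"
  shows "ereal (\<Sum>i\<in>UNIV. real_of_ereal (\<Phi> i (x i)) - real_of_ereal (V i (x i)))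
    \<le> (\<Sum>i\<in>UNIV. \<Phi> i (x i)) - ereal (c x)"
proof -
  have \<Phi>_sum: "(\<Sum>i\<in>UNIV. \<Phi> i (x i)) = ereal (\<Sum>i\<in>UNIV. real_of_ereal (\<Phi> i (x i)))"
    and V_sum: "(\<Sum>i\<in>UNIV. V i (x i)) = ereal (\<Sum>i\<in>UNIV. real_of_ereal (V i (x i)))"
    using finite by (simp_all add: ereal_real' flip: sum_ereal)
  have "c x \<le> (\<Sum>i\<in>UNIV. real_of_ereal (V i (x i)))"
    using assms(1) unfolding admissible_def by (metis V_sum ereal_less_eq(3))
  then show ?thesis
    by (simp add: \<Phi>_sum sum_subtractf)
qed

lemma coupling_cost_ge_sum_integral:
  fixes c :: "('i::finite \<Rightarrow> 'a::euclidean_space) \<Rightarrow> real"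
    and \<Phi> V :: "'i \<Rightarrow> 'a \<Rightarrow> ereal" and \<nu> :: "'i \<Rightarrow> 'a measure"
  assumes adm: "admissible c V" and L1: "\<And>i. L1e (\<nu> i) (\<Phi> i) \<and> L1e (\<nu> i) (V i)"
    and \<pi>: "\<pi> \<in> couplings \<nu>"
  shows "ennreal (\<Sum>i\<in>UNIV. \<integral>y. real_of_ereal (\<Phi> i y) - real_of_ereal (V i y) \<partial>\<nu> i)
    \<le> (\<integral>\<^sup>+ x. e2ennreal ((\<Sum>i\<in>UNIV. \<Phi> i (x i)) - ereal (c x)) \<partial>\<pi>)"
proof -
  define G where "G x = (\<Sum>i\<in>UNIV. real_of_ereal (\<Phi> i (x i)) - real_of_ereal (V i (x i)))" for x
  have integrable: "integrable (\<nu> i) (\<lambda>y. real_of_ereal (\<Phi> i y) - real_of_ereal (V i y))" for i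
    using L1[of i] by (simp add: L1e_def)
  have integrable_\<pi>: "integrable \<pi> (\<lambda>x. real_of_ereal (\<Phi> i (x i)) - real_of_ereal (V i (x i)))" for i
    using integrable_coupling_component[OF \<pi> integrable[of i]] by simp
  have "AE x in \<pi>. \<bar>\<Phi> i (x i)\<bar> \<noteq> \<infinity> \<and> \<bar>V i (x i)\<bar> \<noteq> \<infinity>" for i
    using L1[of i] by (intro AE_coupling_component[OF \<pi>]) (auto simp: L1e_def)
  then have finite_AE: "AE x in \<pi>. \<forall>i. \<bar>\<Phi> i (x i)\<bar> \<noteq> \<infinity> \<and> \<bar>V i (x i)\<bar> \<noteq> \<infinity>"
    by (simp add: eventually_all_finite)
  have G_integral: "(\<integral>x. G x \<partial>\<pi>) = (\<Sum>i\<in>UNIV. \<integral>y. real_of_ereal (\<Phi> i y) - real_of_ereal (V i y) \<partial>\<nu> i)"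
    unfolding G_def using integrable_\<pi>
    by (simp add: integral_sum integral_coupling_component[OF \<pi> integrable])
  have "integrable \<pi> G"
    unfolding G_def[abs_def] by (intro Bochner_Integration.integrable_sum integrable_\<pi>)
  then have "ennreal (\<Sum>i\<in>UNIV. \<integral>y. real_of_ereal (\<Phi> i y) - real_of_ereal (V i y) \<partial>\<nu> i)
      \<le> (\<integral>\<^sup>+ x. ennreal (G x) \<partial>\<pi>)"
    unfolding G_integral[symmetric] by (rule ennreal_integral_le_nn_integral)
  also have "\<dots> \<le> (\<integral>\<^sup>+ x. e2ennreal ((\<Sum>i\<in>UNIV. \<Phi> i (x i)) - ereal (c x)) \<partial>\<pi>)"
    using finite_AE
  proof (intro nn_integral_mono_AE, eventually_elim)
    case (elim x)
    then show ?case
      unfolding G_def using e2ennreal_mono[OF admissible_sum_diff_le[OF adm]] by simp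
  qed
  finally show ?thesis .
qed

lemma Kmin_ge_sum_integral:
  fixes c :: "('i::finite \<Rightarrow> 'a::euclidean_space) \<Rightarrow> real"
    and \<Phi> V :: "'i \<Rightarrow> 'a \<Rightarrow> ereal" and \<nu> :: "'i \<Rightarrow> 'a measure"
  assumes "admissible c V" and "\<And>i. L1e (\<nu> i) (\<Phi> i) \<and> L1e (\<nu> i) (V i)"
  shows "ereal (\<Sum>i\<in>UNIV. \<integral>y. real_of_ereal (\<Phi> i y) - real_of_ereal (V i y) \<partial>\<nu> i)
    \<le> enn2ereal (Kmin (\<lambda>x. e2ennreal ((\<Sum>i\<in>UNIV. \<Phi> i (x i)) - ereal (c x))) \<nu>)"
proof -
  have "ennreal (\<Sum>i\<in>UNIV. \<integral>y. real_of_ereal (\<Phi> i y) - real_of_ereal (V i y) \<partial>\<nu> i)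
    \<le> Kmin (\<lambda>x. e2ennreal ((\<Sum>i\<in>UNIV. \<Phi> i (x i)) - ereal (c x))) \<nu>"
    unfolding Kmin_def using assms by (intro INF_greatest coupling_cost_ge_sum_integral)
  then show ?thesis
    using ereal_le_enn2ereal_ennreal order_trans less_eq_ennreal.rep_eq by blast
qed

lemma prod_powr_le_prod_powr:
  fixes x y e :: "'i \<Rightarrow> real"
  assumes "finite I" and pos: "\<And>i. i \<in> I \<Longrightarrow> 0 < x i" "\<And>i. i \<in> I \<Longrightarrow> 0 < y i"
    and "(\<Sum>i\<in>I. e i * ln (x i)) \<le> (\<Sum>i\<in>I. e i * ln (y i))"
  shows "(\<Prod>i\<in>I. x i powr e i) \<le> (\<Prod>i\<in>I. y i powr e i)"
proof -
  have prod_eq: "(\<Prod>i\<in>I. z i powr e i) = exp (\<Sum>i\<in>I. e i * ln (z i))"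
    if "\<And>i. i \<in> I \<Longrightarrow> 0 < z i" for z
    using that by (simp add: exp_sum[OF \<open>finite I\<close>] powr_def less_imp_neq[symmetric] mult.commute)
  show ?thesis
    using assms by (simp add: prod_eq[OF pos(1)] prod_eq[OF pos(2)])
qed

theorem theorem2p4:
  fixes c :: "('i::finite \<Rightarrow> 'a::euclidean_space) \<Rightarrow> real"
    and \<alpha> :: "'i \<Rightarrow> real"
    and \<Phi> V :: "'i \<Rightarrow> 'a \<Rightarrow> ereal"
  assumes c_meas: "c \<in> borel_measurable (PiM UNIV (\<lambda>_. borel))"
    and alpha_pos: "\<And>i. \<alpha> i > 0"
    and Phi_meas: "\<And>i. \<Phi> i \<in> borel_measurable borel"
    and Phi_range: "\<And>i x. \<Phi> i x \<noteq> -\<infinity>"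
    and Phi_adm: "admissible c \<Phi>"
    and Phi_Z: "\<And>i. 0 < Zint (\<alpha> i) (\<Phi> i) \<and> Zint (\<alpha> i) (\<Phi> i) < \<infinity>"
    and transport_entropy:
      "\<And>\<nu>. (\<forall>i. prob_space (\<nu> i) \<and> sets (\<nu> i) = sets borel) \<Longrightarrow>
        enn2ereal (Kmin (\<lambda>x. e2ennreal ((\<Sum>i\<in>UNIV. \<Phi> i (x i)) - ereal (c x))) \<nu>)
          \<le> (\<Sum>i\<in>UNIV. ereal (1 / \<alpha> i) * Ent (gibbs (\<alpha> i) (\<Phi> i)) (\<nu> i))"
    and V_meas: "\<And>i. V i \<in> borel_measurable borel"
    and V_range: "\<And>i x. V i x \<noteq> -\<infinity>"
    and V_adm: "admissible c V"
    and V_Z: "\<And>i. 0 < Zint (\<alpha> i) (V i) \<and> Zint (\<alpha> i) (V i) < \<infinity>"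
    and L1: "\<And>i. L1e (gibbs (\<alpha> i) (V i)) (V i) \<and> L1e (gibbs (\<alpha> i) (V i)) (\<Phi> i)"
  shows "(\<Prod>i\<in>UNIV. enn2real (Zint (\<alpha> i) (V i)) powr (1 / \<alpha> i))
         \<le> (\<Prod>i\<in>UNIV. enn2real (Zint (\<alpha> i) (\<Phi> i)) powr (1 / \<alpha> i))"
proof -
  define \<nu> where "\<nu> i = gibbs (\<alpha> i) (V i)" for i
  define A where "A i = (\<integral>y. real_of_ereal (\<Phi> i y) - real_of_ereal (V i y) \<partial>\<nu> i)" for i
  define Z\<Phi> where "Z\<Phi> i = enn2real (Zint (\<alpha> i) (\<Phi> i))" for i
  define ZV where "ZV i = enn2real (Zint (\<alpha> i) (V i))" for i
  have \<nu>_prob: "\<forall>i. prob_space (\<nu> i) \<and> sets (\<nu> i) = sets borel"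
    using V_Z by (simp add: \<nu>_def prob_space_gibbs V_meas V_range) (simp add: gibbs_def)
  have Ent: "Ent (gibbs (\<alpha> i) (\<Phi> i)) (\<nu> i) = ereal (\<alpha> i * A i + ln (Z\<Phi> i) - ln (ZV i))" for i
    unfolding \<nu>_def A_def Z\<Phi>_def ZV_def using Phi_Z[of i] V_Z[of i] L1[of i]
    by (intro Ent_gibbs_gibbs Phi_meas V_meas Phi_range V_range) simp_all
  have "ereal (\<Sum>i\<in>UNIV. A i)
      \<le> enn2ereal (Kmin (\<lambda>x. e2ennreal ((\<Sum>i\<in>UNIV. \<Phi> i (x i)) - ereal (c x))) \<nu>)"
    unfolding A_def using L1 by (intro Kmin_ge_sum_integral[OF V_adm]) (simp add: \<nu>_def)
  also have "\<dots> \<le> (\<Sum>i\<in>UNIV. ereal (1 / \<alpha> i) * Ent (gibbs (\<alpha> i) (\<Phi> i)) (\<nu> i))"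
    using \<nu>_prob by (rule transport_entropy)
  also have "\<dots> = ereal (\<Sum>i\<in>UNIV. A i + 1 / \<alpha> i * (ln (Z\<Phi> i) - ln (ZV i)))"
    unfolding Ent sum_ereal[symmetric]
    by (intro sum.cong refl) (simp add: field_simps alpha_pos[THEN less_imp_neq, symmetric])
  finally have "(\<Sum>i\<in>UNIV. 1 / \<alpha> i * ln (ZV i)) \<le> (\<Sum>i\<in>UNIV. 1 / \<alpha> i * ln (Z\<Phi> i))"
    by (simp add: sum.distrib right_diff_distrib sum_subtractf)
  moreover have "0 < Z\<Phi> i" "0 < ZV i" for i
    using Phi_Z[of i] V_Z[of i] by (auto simp: Z\<Phi>_def ZV_def enn2real_positive_iff less_top)
  ultimately show ?thesis
    unfolding Z\<Phi>_def ZV_def by (intro prod_powr_le_prod_powr) auto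
qed

end
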